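(* Let $G$ be a compact abelian group and $H$ a closed subgroup of $G$. Then $\lambda(G)\le\lambda(G/H)$.
   Context: For a compact abelian group $G$ with normalized Haar measure $\mu$ and (multiplicative) dual group of characters $\widehat{G}$, let $\mathbb{Z}[\widehat{G}]$ denote the ring of integral linear combinations of characters, regarded as functions on $G$. For $f\in\mathbb{Z}[\widehat{G}]$, the logarithmic Mahler measure over $G$ is $\mathsf{m}_G(f)=\int_G\log|f|\,d\mu$ (with $\log 0=-\infty$). The Lehmer constant of $G$ is $\lambda(G)=\inf\{\mathsf{m}_G(f): f\in\mathbb{Z}[\widehat{G}],\ \mathsf{m}_G(f)>0\}$ (the infimum of the empty set being $+\infty$). *)

theory Defs
  imports "HOL-Analysis.Analysis"
begin

text \<open>Compact abelian groups are modelled as types of sort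
  topological_group_add, ab_group_add, t2_space with compact UNIV
  (group written additively).\<close>

definition haar :: "('a::{topological_group_add,ab_group_add,t2_space}) measure \<Rightarrow> bool" where
  "haar \<mu> \<longleftrightarrow> sets \<mu> = sets borel \<and> space \<mu> = UNIV \<and> emeasure \<mu> UNIV = 1 \<and>
     (\<forall>g A. A \<in> sets borel \<longrightarrow> emeasure \<mu> ((\<lambda>x. g + x) ` A) = emeasure \<mu> A) \<and>
     (\<forall>U. open U \<longrightarrow> emeasure \<mu> U = (SUP C\<in>{C. compact C \<and> C \<subseteq> U}. emeasure \<mu> C)) \<and>
     (\<forall>A. A \<in> sets borel \<longrightarrow> emeasure \<mu> A = (INF U\<in>{U. open U \<and> A \<subseteq> U}. emeasure \<mu> U))"

definition characters :: "('a::{topological_group_add,ab_group_add} \<Rightarrow> complex) set" where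
  "characters = {chr. continuous_on UNIV chr \<and> (\<forall>x y. chr (x + y) = chr x * chr y) \<and>
                      (\<forall>x. cmod (chr x) = 1)}"

definition int_char_combs :: "('a::{topological_group_add,ab_group_add} \<Rightarrow> complex) set" where
  "int_char_combs = {f. \<exists>S c. finite S \<and> S \<subseteq> characters \<and>
       f = (\<lambda>x. \<Sum>chr\<in>S. of_int (c chr) * chr x)}"

text \<open>Logarithmic Mahler measure, value in the extended reals, with log 0 = -infinity:
  integral of the positive part minus integral of the negative part.\<close>
definition mahler :: "'a measure \<Rightarrow> ('a \<Rightarrow> complex) \<Rightarrow> ereal" where
  "mahler \<mu> f =
     enn2ereal (\<integral>\<^sup>+ x. ennreal (max 0 (ln (cmod (f x)))) \<partial>\<mu>) -
     enn2ereal (\<integral>\<^sup>+ x. (if f x = 0 then \<infinity> else ennreal (max 0 (- ln (cmod (f x))))) \<partial>\<mu>)"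

text \<open>Lehmer constant (Inf of the empty set of ereals is +infinity).\<close>
definition lehmer :: "('a::{topological_group_add,ab_group_add}) measure \<Rightarrow> ereal" where
  "lehmer \<mu> = Inf {mahler \<mu> f | f. f \<in> int_char_combs \<and> mahler \<mu> f > 0}"

end

theory Submission
  imports Defs "HOL-Probability.Probability" "HOL-Computational_Algebra.Polynomial"
begin

text \<open>Every \<open>f \<in> \<int>[(G/H)^]\<close> pulls back along the quotient map \<open>\<pi>\<close> to \<open>f \<circ> \<pi> \<in> \<int>[G^]\<close>
  with the same Mahler measure, so every positive Mahler measure over \<open>G/H\<close> is one over \<open>G\<close>.
  The Mahler measures agree because \<open>|f \<circ> \<pi>|\<^sup>2\<close> under \<open>\<mu>\<close> and \<open>|f|\<^sup>2\<close> under \<open>\<nu>\<close> have the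
  same distribution: their powers are trigonometric polynomials, whose Haar integrals are their
  constant coefficients, and these coincide because \<open>\<phi> \<circ> \<pi>\<close> is trivial only for trivial \<open>\<phi>\<close>;
  a distribution with compact support is determined by its moments (Weierstrass approximation
  and Levy's uniqueness theorem).\<close>

lemma borel_measurable_continuous_on_UNIV:
  assumes "sets M = sets borel" "continuous_on UNIV f"
  shows "f \<in> borel_measurable M"
  using borel_measurable_continuous_onI[OF assms(2)] measurable_cong_sets[OF assms(1) refl]
  by blast

lemma haar_prob_space: "haar \<mu> \<Longrightarrow> prob_space \<mu>"
  unfolding haar_def by (intro prob_spaceI) auto

lemma sets_haar: "haar \<mu> \<Longrightarrow> sets \<mu> = sets borel"
  unfolding haar_def by auto

lemma space_haar: "haar \<mu> \<Longrightarrow> space \<mu> = UNIV"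
  unfolding haar_def by auto

lemma measurable_translate_haar:
  fixes \<mu> :: "('a::{topological_group_add,ab_group_add,t2_space}) measure"
  assumes "haar \<mu>"
  shows "(\<lambda>x. b + x) \<in> measurable \<mu> \<mu>"
  using measurable_cong_sets[OF sets_haar[OF assms] sets_haar[OF assms]]
  by (simp add: borel_measurable_continuous_onI continuous_intros)

lemma distr_haar_translate:
  fixes \<mu> :: "('a::{topological_group_add,ab_group_add,t2_space}) measure"
  assumes "haar \<mu>"
  shows "distr \<mu> \<mu> (\<lambda>x. b + x) = \<mu>"
proof (rule measure_eqI)
  fix A assume A: "A \<in> sets (distr \<mu> \<mu> (\<lambda>x. b + x))"
  have "(\<lambda>x. b + x) -` A \<inter> space \<mu> = (\<lambda>x. - b + x) ` A"
    using space_haar[OF assms] by (auto simp: image_iff) (metis add_diff_cancel_left')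
  then have "emeasure (distr \<mu> \<mu> (\<lambda>x. b + x)) A = emeasure \<mu> ((\<lambda>x. - b + x) ` A)"
    using A by (simp add: emeasure_distr[OF measurable_translate_haar[OF assms]])
  also have "\<dots> = emeasure \<mu> A"
    using assms A sets_haar[OF assms] unfolding haar_def by (metis sets_distr)
  finally show "emeasure (distr \<mu> \<mu> (\<lambda>x. b + x)) A = emeasure \<mu> A" .
qed simp

lemma characters_continuous: "\<phi> \<in> characters \<Longrightarrow> continuous_on UNIV \<phi>"
  and characters_norm: "\<phi> \<in> characters \<Longrightarrow> cmod (\<phi> x) = 1"
  and characters_add: "\<phi> \<in> characters \<Longrightarrow> \<phi> (x + y) = \<phi> x * \<phi> y"
  unfolding characters_def by auto

lemma characters_one: "(\<lambda>x. 1) \<in> characters"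
  unfolding characters_def by auto

lemma characters_mult: "\<phi> \<in> characters \<Longrightarrow> \<psi> \<in> characters \<Longrightarrow> (\<lambda>x. \<phi> x * \<psi> x) \<in> characters"
  unfolding characters_def by (auto intro!: continuous_intros simp: norm_mult)

lemma characters_cnj: "\<phi> \<in> characters \<Longrightarrow> (\<lambda>x. cnj (\<phi> x)) \<in> characters"
  unfolding characters_def by (auto intro!: continuous_intros)

lemma characters_comp_hom:
  fixes \<pi> :: "'a::{topological_group_add,ab_group_add} \<Rightarrow> 'b::{topological_group_add,ab_group_add}"
  assumes "continuous_on UNIV \<pi>" "\<forall>x y. \<pi> (x + y) = \<pi> x + \<pi> y" "\<phi> \<in> characters"
  shows "(\<lambda>x. \<phi> (\<pi> x)) \<in> characters"
  using assms unfolding characters_def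
  by (auto intro: continuous_on_compose2[where f=\<pi> and g=\<phi> and t=UNIV])

lemma integral_character_haar:
  fixes \<mu> :: "('a::{topological_group_add,ab_group_add,t2_space}) measure"
  assumes "haar \<mu>" and "\<phi> \<in> characters"
  shows "integral\<^sup>L \<mu> \<phi> = (if \<forall>x. \<phi> x = 1 then 1 else 0)"
proof (cases "\<forall>x. \<phi> x = 1")
  case True
  interpret prob_space \<mu> using haar_prob_space[OF assms(1)] .
  have "\<phi> = (\<lambda>_. 1)" using True by auto
  then show ?thesis using True by (simp add: prob_space)
next
  case False
  then obtain b where b: "\<phi> b \<noteq> 1" by auto
  have "integral\<^sup>L \<mu> \<phi> = integral\<^sup>L (distr \<mu> \<mu> (\<lambda>x. b + x)) \<phi>"
    by (simp add: distr_haar_translate[OF assms(1)])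
  also have "\<dots> = integral\<^sup>L \<mu> (\<lambda>x. \<phi> (b + x))"
    by (intro integral_distr measurable_translate_haar[OF assms(1)]
        borel_measurable_continuous_on_UNIV[OF sets_haar[OF assms(1)]]
        characters_continuous[OF assms(2)])
  also have "\<dots> = \<phi> b * integral\<^sup>L \<mu> \<phi>"
    by (simp add: characters_add[OF assms(2)])
  finally have "(1 - \<phi> b) * integral\<^sup>L \<mu> \<phi> = 0" by (simp add: algebra_simps)
  then show ?thesis using b False by simp
qed

inductive_set trig_poly :: "('a::{topological_group_add,ab_group_add} \<Rightarrow> complex) set" where
  character: "\<phi> \<in> characters \<Longrightarrow> \<phi> \<in> trig_poly"
| add: "F \<in> trig_poly \<Longrightarrow> G \<in> trig_poly \<Longrightarrow> (\<lambda>x. F x + G x) \<in> trig_poly"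
| mult_const: "F \<in> trig_poly \<Longrightarrow> (\<lambda>x. c * F x) \<in> trig_poly"

lemma trig_poly_continuous: "F \<in> trig_poly \<Longrightarrow> continuous_on UNIV F"
  by (induction rule: trig_poly.induct) (auto intro!: continuous_intros simp: characters_continuous)

lemma trig_poly_bounded: "F \<in> trig_poly \<Longrightarrow> \<exists>B. \<forall>x. norm (F x) \<le> B"
proof (induction rule: trig_poly.induct)
  case (character \<phi>)
  then show ?case using characters_norm by (metis order_refl)
next
  case (add F G)
  then obtain B C where "\<forall>x. norm (F x) \<le> B" "\<forall>x. norm (G x) \<le> C" by auto
  then have "\<forall>x. norm (F x + G x) \<le> B + C" by (metis add_mono norm_triangle_le)
  then show ?case by blast
next
  case (mult_const F c)
  then obtain B where "\<forall>x. norm (F x) \<le> B" by auto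
  then have "\<forall>x. norm (c * F x) \<le> norm c * B" by (simp add: norm_mult mult_left_mono)
  then show ?case by blast
qed

lemma trig_poly_const: "(\<lambda>x. c) \<in> trig_poly"
  using trig_poly.mult_const[OF trig_poly.character[OF characters_one], of c] by simp

lemma trig_poly_mult_character:
  "F \<in> trig_poly \<Longrightarrow> \<phi> \<in> characters \<Longrightarrow> (\<lambda>x. F x * \<phi> x) \<in> trig_poly"
proof (induction rule: trig_poly.induct)
  case (character \<psi>)
  then show ?case by (intro trig_poly.character characters_mult)
next
  case (add F G)
  then show ?case
    using trig_poly.add[of "\<lambda>x. F x * \<phi> x" "\<lambda>x. G x * \<phi> x"] by (simp add: distrib_right)
next
  case (mult_const F c)
  then show ?case using trig_poly.mult_const[of "\<lambda>x. F x * \<phi> x" c] by (simp add: mult.assoc)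
qed

lemma trig_poly_mult:
  assumes "F \<in> trig_poly" and "G \<in> trig_poly"
  shows "(\<lambda>x. F x * G x) \<in> trig_poly"
  using assms(2)
proof (induction rule: trig_poly.induct)
  case (character \<phi>)
  then show ?case by (intro trig_poly_mult_character assms(1))
next
  case (add G1 G2)
  then show ?case
    using trig_poly.add[of "\<lambda>x. F x * G1 x" "\<lambda>x. F x * G2 x"] by (simp add: distrib_left)
next
  case (mult_const G c)
  then show ?case using trig_poly.mult_const[of "\<lambda>x. F x * G x" c] by (simp add: algebra_simps)
qed

lemma trig_poly_power: "F \<in> trig_poly \<Longrightarrow> (\<lambda>x. F x ^ k) \<in> trig_poly"
  by (induction k) (auto intro: trig_poly_mult trig_poly_const)

lemma trig_poly_cnj: "F \<in> trig_poly \<Longrightarrow> (\<lambda>x. cnj (F x)) \<in> trig_poly"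
  by (induction rule: trig_poly.induct) (auto intro: trig_poly.intros characters_cnj)

lemma trig_poly_norm_power:
  assumes "f \<in> trig_poly"
  shows "(\<lambda>x. complex_of_real ((cmod (f x))\<^sup>2 ^ k)) \<in> trig_poly"
proof -
  have "(f x * cnj (f x)) ^ k = complex_of_real ((cmod (f x))\<^sup>2 ^ k)" for x
    by (simp add: complex_norm_square[symmetric])
  moreover have "(\<lambda>x. (f x * cnj (f x)) ^ k) \<in> trig_poly"
    by (intro trig_poly_power trig_poly_mult assms trig_poly_cnj)
  ultimately show ?thesis by simp
qed

lemma trig_poly_comp_hom:
  fixes \<pi> :: "'a::{topological_group_add,ab_group_add} \<Rightarrow> 'b::{topological_group_add,ab_group_add}"
  assumes "continuous_on UNIV \<pi>" "\<forall>x y. \<pi> (x + y) = \<pi> x + \<pi> y" "F \<in> trig_poly"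
  shows "(\<lambda>x. F (\<pi> x)) \<in> trig_poly"
  using assms(3)
  by (induction rule: trig_poly.induct)
    (auto intro: trig_poly.intros characters_comp_hom[OF assms(1,2)])

lemma int_char_combs_subset_trig_poly: "int_char_combs \<subseteq> trig_poly"
proof
  fix f assume "f \<in> int_char_combs"
  then obtain S c where S: "finite S" "S \<subseteq> characters"
    and f: "f = (\<lambda>x. \<Sum>\<phi>\<in>S. of_int (c \<phi>) * \<phi> x)"
    unfolding int_char_combs_def by auto
  have "(\<lambda>x. \<Sum>\<phi>\<in>S. of_int (c \<phi>) * \<phi> x) \<in> trig_poly"
    using S
  proof (induction S rule: finite_induct)
    case empty
    then show ?case using trig_poly_const[of 0] by simp
  next
    case (insert \<phi> S)
    then have "(\<lambda>x. of_int (c \<phi>) * \<phi> x) \<in> trig_poly"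
      and "(\<lambda>x. \<Sum>\<phi>\<in>S. of_int (c \<phi>) * \<phi> x) \<in> trig_poly"
      by (auto intro: trig_poly.mult_const trig_poly.character)
    from trig_poly.add[OF this] show ?case using insert.hyps by simp
  qed
  then show "f \<in> trig_poly" using f by simp
qed

lemma int_char_combs_comp_surj_hom:
  fixes \<pi> :: "'a::{topological_group_add,ab_group_add} \<Rightarrow> 'b::{topological_group_add,ab_group_add}"
  assumes "continuous_on UNIV \<pi>" "\<forall>x y. \<pi> (x + y) = \<pi> x + \<pi> y" "surj \<pi>"
    and "f \<in> int_char_combs"
  shows "(\<lambda>x. f (\<pi> x)) \<in> int_char_combs"
proof -
  obtain S c where S: "finite S" "S \<subseteq> characters"
    and f: "f = (\<lambda>x. \<Sum>\<phi>\<in>S. of_int (c \<phi>) * \<phi> x)"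
    using assms(4) unfolding int_char_combs_def by auto
  define pull where "pull = (\<lambda>(\<phi>::'b \<Rightarrow> complex) x. \<phi> (\<pi> x))"
  have "inj pull"
  proof (rule injI)
    fix \<phi> \<psi> assume "pull \<phi> = pull \<psi>"
    then show "\<phi> = \<psi>" using assms(3) unfolding pull_def by (metis surjD ext)
  qed
  have "(\<lambda>x. f (\<pi> x)) = (\<lambda>x. \<Sum>\<psi>\<in>pull ` S. of_int (c (inv pull \<psi>)) * \<psi> x)"
  proof
    fix x
    have "(\<Sum>\<psi>\<in>pull ` S. of_int (c (inv pull \<psi>)) * \<psi> x) =
        (\<Sum>\<phi>\<in>S. of_int (c (inv pull (pull \<phi>))) * pull \<phi> x)"
      by (rule sum.reindex[OF inj_on_subset[OF \<open>inj pull\<close>], simplified])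
    also have "\<dots> = f (\<pi> x)"
      by (simp only: inv_f_f[OF \<open>inj pull\<close>]) (simp add: f pull_def)
    finally show "f (\<pi> x) = (\<Sum>\<psi>\<in>pull ` S. of_int (c (inv pull \<psi>)) * \<psi> x)" ..
  qed
  moreover have "pull ` S \<subseteq> characters"
    using S(2) characters_comp_hom[OF assms(1,2)] unfolding pull_def by auto
  ultimately show ?thesis
    using S(1) unfolding int_char_combs_def
    by (intro CollectI exI[where x="pull ` S"] exI[where x="\<lambda>\<psi>. c (inv pull \<psi>)"]) simp
qed

lemma integrable_trig_poly:
  fixes \<mu> :: "('a::{topological_group_add,ab_group_add,t2_space}) measure"
  assumes "haar \<mu>" "F \<in> trig_poly"
  shows "integrable \<mu> F"
proof -
  interpret prob_space \<mu> using haar_prob_space[OF assms(1)] .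
  obtain B where "\<forall>x. norm (F x) \<le> B" using trig_poly_bounded[OF assms(2)] by auto
  then show ?thesis
    by (intro integrable_const_bound[where B=B] AE_I2
        borel_measurable_continuous_on_UNIV[OF sets_haar[OF assms(1)]]
        trig_poly_continuous[OF assms(2)]) auto
qed

lemma integral_trig_poly_comp_surj_hom:
  fixes \<mu> :: "('a::{topological_group_add,ab_group_add,t2_space}) measure"
    and \<nu> :: "('b::{topological_group_add,ab_group_add,t2_space}) measure"
    and \<pi> :: "'a \<Rightarrow> 'b"
  assumes "haar \<mu>" "haar \<nu>"
    and hom: "continuous_on UNIV \<pi>" "\<forall>x y. \<pi> (x + y) = \<pi> x + \<pi> y" and "surj \<pi>"
    and "F \<in> trig_poly"
  shows "integral\<^sup>L \<mu> (\<lambda>x. F (\<pi> x)) = integral\<^sup>L \<nu> F"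
  using assms(6)
proof (induction rule: trig_poly.induct)
  case (character \<phi>)
  have "(\<forall>x. \<phi> (\<pi> x) = 1) \<longleftrightarrow> (\<forall>y. \<phi> y = 1)" using \<open>surj \<pi>\<close> by (metis surjD)
  then show ?case
    using integral_character_haar[OF assms(1) characters_comp_hom[OF hom character]]
      integral_character_haar[OF assms(2) character] by simp
next
  case (add F G)
  then show ?case
    by (simp add: integrable_trig_poly trig_poly_comp_hom assms)
qed simp

lemma integrable_continuous_comp_bounded:
  fixes h :: "real \<Rightarrow> 'b::{banach,second_countable_topology}"
  assumes "prob_space M" "Y \<in> borel_measurable M" "compact S" "\<forall>x\<in>space M. Y x \<in> S"
    and "continuous_on UNIV h"
  shows "integrable M (\<lambda>x. h (Y x))"
proof -
  interpret prob_space M by fact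
  have "compact (h ` S)"
    by (rule compact_continuous_image[OF continuous_on_subset[OF assms(5)] assms(3)]) auto
  then obtain B where "\<forall>z\<in>h ` S. norm z \<le> B" using compact_imp_bounded bounded_iff by metis
  then show ?thesis
    using assms(2,4) borel_measurable_continuous_onI[OF assms(5)]
    by (intro integrable_const_bound[where B=B] AE_I2) auto
qed

context
  fixes M :: "'a measure" and Y :: "'a \<Rightarrow> real" and S :: "real set"
  assumes M_prob: "prob_space M" and Y_measurable: "Y \<in> borel_measurable M"
    and S_compact: "compact S" and Y_in_S: "\<forall>x\<in>space M. Y x \<in> S"
begin

private lemmas integrable_comp =
  integrable_continuous_comp_bounded[OF M_prob Y_measurable S_compact Y_in_S]

lemma integral_poly_comp:
  "integral\<^sup>L M (\<lambda>x. poly p (Y x)) = (\<Sum>i\<le>degree p. coeff p i * integral\<^sup>L M (\<lambda>x. Y x ^ i))"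
  unfolding poly_altdef
  by (subst Bochner_Integration.integral_sum) (auto intro!: integrable_comp continuous_intros)

lemma abs_integral_comp_diff_le:
  fixes g h :: "real \<Rightarrow> real"
  assumes "continuous_on UNIV g" "continuous_on UNIV h" "\<forall>s\<in>S. \<bar>g s - h s\<bar> \<le> e"
  shows "\<bar>integral\<^sup>L M (\<lambda>x. g (Y x)) - integral\<^sup>L M (\<lambda>x. h (Y x))\<bar> \<le> e"
proof -
  interpret prob_space M by (rule M_prob)
  have int: "integrable M (\<lambda>x. g (Y x) - h (Y x))"
    using integrable_comp[of "\<lambda>s. g s - h s"] assms(1,2) by (simp add: continuous_on_diff)
  have bound: "AE x in M. \<bar>g (Y x) - h (Y x)\<bar> \<le> e"
    using assms(3) Y_in_S by (intro AE_I2) auto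
  have "integral\<^sup>L M (\<lambda>x. g (Y x) - h (Y x)) \<le> e"
    by (rule integral_le_const[OF int]) (use bound in auto)
  moreover have "- e \<le> integral\<^sup>L M (\<lambda>x. g (Y x) - h (Y x))"
    by (rule integral_ge_const[OF int]) (use bound in auto)
  moreover have "integral\<^sup>L M (\<lambda>x. g (Y x) - h (Y x)) =
      integral\<^sup>L M (\<lambda>x. g (Y x)) - integral\<^sup>L M (\<lambda>x. h (Y x))"
    by (intro Bochner_Integration.integral_diff integrable_comp assms)
  ultimately show ?thesis by linarith
qed

lemma char_distr_cos_sin:
  "char (distr M borel Y) t =
    of_real (integral\<^sup>L M (\<lambda>x. cos (t * Y x))) + \<i> * of_real (integral\<^sup>L M (\<lambda>x. sin (t * Y x)))"
proof -
  have iexp: "iexp s = of_real (cos s) + \<i> * of_real (sin s)" for s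
    by (simp add: cis_conv_exp[symmetric] complex_eq_iff)
  have "char (distr M borel Y) t = integral\<^sup>L M (\<lambda>x. iexp (t * Y x))"
    unfolding char_def
    by (rule integral_distr[OF Y_measurable]) (auto intro!: borel_measurable_continuous_onI continuous_intros)
  also have "\<dots> = integral\<^sup>L M (\<lambda>x. of_real (cos (t * Y x)))
      + integral\<^sup>L M (\<lambda>x. \<i> * of_real (sin (t * Y x)))"
    unfolding iexp by (intro Bochner_Integration.integral_add integrable_comp continuous_intros)
  finally show ?thesis by simp
qed

end

lemma integral_continuous_comp_eq_if_moments_eq:
  fixes Y1 :: "'a \<Rightarrow> real" and Y2 :: "'b \<Rightarrow> real"
  assumes P1: "prob_space M1" "Y1 \<in> borel_measurable M1" "\<forall>x\<in>space M1. Y1 x \<in> S"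
    and P2: "prob_space M2" "Y2 \<in> borel_measurable M2" "\<forall>x\<in>space M2. Y2 x \<in> S"
    and "compact S"
    and moments: "\<And>k. integral\<^sup>L M1 (\<lambda>x. Y1 x ^ k) = integral\<^sup>L M2 (\<lambda>x. Y2 x ^ k)"
    and g: "continuous_on UNIV (g :: real \<Rightarrow> real)"
  shows "integral\<^sup>L M1 (\<lambda>x. g (Y1 x)) = integral\<^sup>L M2 (\<lambda>x. g (Y2 x))"
proof -
  have "\<bar>integral\<^sup>L M1 (\<lambda>x. g (Y1 x)) - integral\<^sup>L M2 (\<lambda>x. g (Y2 x))\<bar> \<le> 0 + e"
    if "e > 0" for e
  proof -
    have "\<exists>h. (\<exists>p. h = poly p) \<and> (\<forall>s\<in>S. \<bar>g s - h s\<bar> < e / 2)"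
    proof (rule Stone_Weierstrass_HOL[OF \<open>compact S\<close>])
      show "\<exists>p. (\<lambda>x. c) = poly p" for c
        by (rule exI[where x="[:c:]"]) auto
      show "\<exists>p. (\<lambda>x. f x + h x) = poly p" if "(\<exists>p. f = poly p) \<and> (\<exists>p. h = poly p)" for f h
      proof -
        from that obtain p q where "f = poly p" "h = poly q" by blast
        then show ?thesis by (intro exI[where x="p + q"]) auto
      qed
      show "\<exists>p. (\<lambda>x. f x * h x) = poly p" if "(\<exists>p. f = poly p) \<and> (\<exists>p. h = poly p)" for f h
      proof -
        from that obtain p q where "f = poly p" "h = poly q" by blast
        then show ?thesis by (intro exI[where x="p * q"]) auto
      qed
      show "\<exists>f. (\<exists>p. f = poly p) \<and> f x \<noteq> f y" if "x \<in> S \<and> y \<in> S \<and> x \<noteq> y" for x y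
        using that by (intro exI[where x="poly [:0, 1:]"]) auto
      show "continuous_on S g" using continuous_on_subset[OF g] by blast
    qed (use \<open>e > 0\<close> in \<open>auto intro: continuous_intros\<close>)
    then obtain p where p: "\<forall>s\<in>S. \<bar>g s - poly p s\<bar> \<le> e / 2"
      by (auto intro: less_imp_le)
    have "integral\<^sup>L M1 (\<lambda>x. poly p (Y1 x)) = integral\<^sup>L M2 (\<lambda>x. poly p (Y2 x))"
      by (simp add: integral_poly_comp[OF P1(1,2) \<open>compact S\<close> P1(3)]
          integral_poly_comp[OF P2(1,2) \<open>compact S\<close> P2(3)] moments)
    then show ?thesis
      using abs_integral_comp_diff_le[OF P1(1,2) \<open>compact S\<close> P1(3) g _ p]
        abs_integral_comp_diff_le[OF P2(1,2) \<open>compact S\<close> P2(3) g _ p]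
      by (simp add: continuous_intros) (smt (verit))
  qed
  then have "\<bar>integral\<^sup>L M1 (\<lambda>x. g (Y1 x)) - integral\<^sup>L M2 (\<lambda>x. g (Y2 x))\<bar> \<le> 0"
    by (rule field_le_epsilon)
  then show ?thesis by simp
qed

lemma distr_eq_if_moments_eq:
  fixes Y1 :: "'a \<Rightarrow> real" and Y2 :: "'b \<Rightarrow> real"
  assumes P1: "prob_space M1" "Y1 \<in> borel_measurable M1" "\<forall>x\<in>space M1. Y1 x \<in> S"
    and P2: "prob_space M2" "Y2 \<in> borel_measurable M2" "\<forall>x\<in>space M2. Y2 x \<in> S"
    and "compact S"
    and moments: "\<And>k. integral\<^sup>L M1 (\<lambda>x. Y1 x ^ k) = integral\<^sup>L M2 (\<lambda>x. Y2 x ^ k)"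
  shows "distr M1 borel Y1 = distr M2 borel Y2"
proof (rule Levy_uniqueness)
  show "real_distribution (distr M1 borel Y1)" "real_distribution (distr M2 borel Y2)"
    unfolding real_distribution_def real_distribution_axioms_def
    using prob_space.prob_space_distr[OF P1(1,2)] prob_space.prob_space_distr[OF P2(1,2)]
    by simp_all
  have "char (distr M1 borel Y1) t = char (distr M2 borel Y2) t" for t
  proof -
    note same_integral = integral_continuous_comp_eq_if_moments_eq[OF P1 P2 \<open>compact S\<close> moments]
    have "integral\<^sup>L M1 (\<lambda>x. cos (t * Y1 x)) = integral\<^sup>L M2 (\<lambda>x. cos (t * Y2 x))"
      and "integral\<^sup>L M1 (\<lambda>x. sin (t * Y1 x)) = integral\<^sup>L M2 (\<lambda>x. sin (t * Y2 x))"
      by (rule same_integral[of "\<lambda>s. cos (t * s)"] same_integral[of "\<lambda>s. sin (t * s)"];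
          intro continuous_intros)+
    then show ?thesis
      by (simp add: char_distr_cos_sin[OF P1(1,2) \<open>compact S\<close> P1(3)]
          char_distr_cos_sin[OF P2(1,2) \<open>compact S\<close> P2(3)])
  qed
  then show "char (distr M1 borel Y1) = char (distr M2 borel Y2)" ..
qed

lemma mahler_eq_if_distr_norm_square_eq:
  fixes f :: "'a \<Rightarrow> complex" and g :: "'b \<Rightarrow> complex"
  assumes "(\<lambda>x. (cmod (f x))\<^sup>2) \<in> borel_measurable M" "(\<lambda>x. (cmod (g x))\<^sup>2) \<in> borel_measurable N"
    and distr: "distr M borel (\<lambda>x. (cmod (f x))\<^sup>2) = distr N borel (\<lambda>x. (cmod (g x))\<^sup>2)"
  shows "mahler M f = mahler N g"
proof -
  define pos :: "real \<Rightarrow> ennreal" where "pos s = ennreal (max 0 (ln (sqrt s)))" for s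
  define neg :: "real \<Rightarrow> ennreal"
    where "neg s = (if s = 0 then \<infinity> else ennreal (max 0 (- ln (sqrt s))))" for s
  have [measurable]: "pos \<in> borel_measurable borel" "neg \<in> borel_measurable borel"
    unfolding pos_def neg_def by measurable
  have pos: "pos ((cmod z)\<^sup>2) = ennreal (max 0 (ln (cmod z)))"
    and neg: "neg ((cmod z)\<^sup>2) = (if z = 0 then \<infinity> else ennreal (max 0 (- ln (cmod z))))" for z
    by (simp_all add: pos_def neg_def)
  have "mahler M f = enn2ereal (\<integral>\<^sup>+ s. pos s \<partial>distr M borel (\<lambda>x. (cmod (f x))\<^sup>2))
      - enn2ereal (\<integral>\<^sup>+ s. neg s \<partial>distr M borel (\<lambda>x. (cmod (f x))\<^sup>2))"
    by (simp add: nn_integral_distr assms(1) pos neg mahler_def)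
  also have "\<dots> = mahler N g"
    by (simp add: distr nn_integral_distr assms(2) pos neg mahler_def)
  finally show ?thesis .
qed

lemma mahler_comp_surj_hom:
  fixes \<mu> :: "('a::{topological_group_add,ab_group_add,t2_space}) measure"
    and \<nu> :: "('b::{topological_group_add,ab_group_add,t2_space}) measure"
    and \<pi> :: "'a \<Rightarrow> 'b"
  assumes "haar \<mu>" "haar \<nu>"
    and hom: "continuous_on UNIV \<pi>" "\<forall>x y. \<pi> (x + y) = \<pi> x + \<pi> y" "surj \<pi>"
    and "f \<in> int_char_combs"
  shows "mahler \<mu> (\<lambda>x. f (\<pi> x)) = mahler \<nu> f"
proof (rule mahler_eq_if_distr_norm_square_eq)
  have f: "f \<in> trig_poly" using assms(6) int_char_combs_subset_trig_poly by blast
  then obtain B where B: "\<forall>y. cmod (f y) \<le> B" using trig_poly_bounded by blast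
  define X where "X y = (cmod (f y))\<^sup>2" for y
  have X_range: "X y \<in> {0..B\<^sup>2}" for y
    unfolding X_def using B by (auto intro: power_mono)
  have "continuous_on UNIV X"
    unfolding X_def by (intro continuous_intros trig_poly_continuous f)
  then have "continuous_on UNIV (\<lambda>x. X (\<pi> x))"
    using hom(1) by (auto intro: continuous_on_compose2[where t=UNIV])
  then show X\<pi>: "(\<lambda>x. (cmod (f (\<pi> x)))\<^sup>2) \<in> borel_measurable \<mu>"
    unfolding X_def by (rule borel_measurable_continuous_on_UNIV[OF sets_haar[OF assms(1)]])
  show X: "(\<lambda>y. (cmod (f y))\<^sup>2) \<in> borel_measurable \<nu>"
    using \<open>continuous_on UNIV X\<close>
    unfolding X_def by (rule borel_measurable_continuous_on_UNIV[OF sets_haar[OF assms(2)]])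
  have "integral\<^sup>L \<mu> (\<lambda>x. X (\<pi> x) ^ k) = integral\<^sup>L \<nu> (\<lambda>y. X y ^ k)" for k
    using integral_trig_poly_comp_surj_hom[OF assms(1,2) hom trig_poly_norm_power[OF f, of k]]
    unfolding X_def integral_complex_of_real by simp
  then show "distr \<mu> borel (\<lambda>x. (cmod (f (\<pi> x)))\<^sup>2) = distr \<nu> borel (\<lambda>y. (cmod (f y))\<^sup>2)"
    using distr_eq_if_moments_eq[OF haar_prob_space[OF assms(1)] X\<pi> _ haar_prob_space[OF assms(2)]
        X _ compact_Icc] X_range
    unfolding X_def by blast
qed

theorem lemma2p2:
  fixes \<mu> :: "('a::{topological_group_add,ab_group_add,t2_space}) measure"
    and \<nu> :: "('b::{topological_group_add,ab_group_add,t2_space}) measure"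
    and H :: "'a set"
    and \<pi> :: "'a \<Rightarrow> 'b"
  assumes "compact (UNIV :: 'a set)"
    and "haar \<mu>"
    and "closed H" and "0 \<in> H" and "\<forall>x\<in>H. \<forall>y\<in>H. x + y \<in> H" and "\<forall>x\<in>H. - x \<in> H"
    and "continuous_on UNIV \<pi>" and "\<forall>x y. \<pi> (x + y) = \<pi> x + \<pi> y"
    and "surj \<pi>" and "\<forall>U. open U \<longrightarrow> open (\<pi> ` U)"
    and "{x. \<pi> x = 0} = H"
    and "haar \<nu>"
  shows "lehmer \<mu> \<le> lehmer \<nu>"
proof -
  have "{mahler \<nu> f | f. f \<in> int_char_combs \<and> mahler \<nu> f > 0} \<subseteq>
        {mahler \<mu> f | f. f \<in> int_char_combs \<and> mahler \<mu> f > 0}"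
  proof clarify
    fix f :: "'b \<Rightarrow> complex" assume f: "f \<in> int_char_combs" "mahler \<nu> f > 0"
    have "mahler \<mu> (\<lambda>x. f (\<pi> x)) = mahler \<nu> f"
      by (rule mahler_comp_surj_hom[OF assms(2,12,7,8,9) f(1)])
    moreover have "(\<lambda>x. f (\<pi> x)) \<in> int_char_combs"
      by (rule int_char_combs_comp_surj_hom[OF assms(7,8,9) f(1)])
    ultimately show "\<exists>g. mahler \<nu> f = mahler \<mu> g \<and> g \<in> int_char_combs \<and> mahler \<mu> g > 0"
      using f(2) by metis
  qed
  then show ?thesis
    unfolding lehmer_def by (rule Inf_superset_mono)
qed

end
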